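(* Let $\mathbf{a}=(a_1,a_2,a_3,a_4)\in\mathbb{N}^4$ with $a_1\le a_2\le a_3\le a_4$, let $A=a_1+a_2+a_3+a_4$, let $m\ge3$ be an integer, $a\in\mathbb{N}$, $b\in\mathbb{Z}$, and $N=\frac{m-2}{2}(a-b)+b$. Suppose the system $$a=a_1x_1^2+a_2x_2^2+a_3x_3^2+a_4x_4^2,\qquad b=a_1x_1+a_2x_2+a_3x_3+a_4x_4$$ has an integer solution $(x_1,x_2,x_3,x_4)\in\mathbb{Z}^4$. Then: (i) $a\equiv b\pmod 2$, $Aa-b^2\ge0$, and $N=P_{m,\mathbf{a}}(x_1,x_2,x_3,x_4)$; (ii) if $b\ge\sqrt{a_2+a_3+a_4}\cdot\sqrt a$, then $N$ is represented by $P_{m,\mathbf{a}}$ over $\mathbb{N}_0$.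
   Context: $P_m(x)=\frac{m-2}{2}(x^2-x)+x$ for integers $x$, and $P_{m,\mathbf{a}}(\mathbf{x})=\sum_{i=1}^4a_iP_m(x_i)$. $N$ is represented by $P_{m,\mathbf{a}}$ over $\mathbb{N}_0$ if $N=P_{m,\mathbf{a}}(\mathbf{x})$ for some $\mathbf{x}\in\mathbb{N}_0^4$, where $\mathbb{N}_0=\{0,1,2,\dots\}$. *)

theory Defs
  imports Complex_Main
begin

text \<open>Generalized m-gonal number P_m(x) = (m-2)/2 (x^2 - x) + x for integers x.
  Since x^2 - x is always even, the integer division below is exact.\<close>
definition polyg :: "int \<Rightarrow> int \<Rightarrow> int" where
  "polyg m x = ((m - 2) * (x^2 - x)) div 2 + x"

definition polygF :: "int \<Rightarrow> (nat \<Rightarrow> int) \<Rightarrow> (nat \<Rightarrow> int) \<Rightarrow> int" where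
  "polygF m a x = (\<Sum>i=1..4. a i * polyg m (x i))"

definition represented_N0 :: "int \<Rightarrow> (nat \<Rightarrow> int) \<Rightarrow> real \<Rightarrow> bool" where
  "represented_N0 m a N \<longleftrightarrow> (\<exists>y::nat \<Rightarrow> int. (\<forall>i\<in>{1..4}. y i \<ge> 0) \<and> N = of_int (polygF m a y))"

end

theory Submission
  imports Defs
begin

text \<open>Write A and B for the weighted sums of the squares x_i^2 and of the x_i. Then
  A - B = \<Sum> a_i x_i (x_i - 1) is even, and since 2 P_m(x) = (m - 2)(x^2 - x) + 2x, the value
  of P_{m,a} at x is (m - 2)/2 (A - B) + B = N; the inequality B^2 \<le> (\<Sum> a_i) A is weighted
  Cauchy-Schwarz. For (ii), x itself is the required representation: if some x_j were negative,
  the sum T of the other three terms a_i x_i would exceed B \<ge> 0, while Cauchy-Schwarz over the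
  other three indices gives T^2 \<le> (a_2 + a_3 + a_4) A \<le> B^2, as a_1 is the smallest weight.\<close>

lemma weighted_Cauchy_Schwarz:
  fixes a x :: "'i \<Rightarrow> 'a::linordered_idom"
  assumes "\<And>i. i \<in> I \<Longrightarrow> 0 \<le> a i"
  shows "(\<Sum>i\<in>I. a i * x i)\<^sup>2 \<le> (\<Sum>i\<in>I. a i) * (\<Sum>i\<in>I. a i * (x i)\<^sup>2)"
proof -
  let ?S = "\<Sum>i\<in>I. a i" and ?T = "\<Sum>i\<in>I. a i * x i" and ?Q = "\<Sum>i\<in>I. a i * (x i)\<^sup>2"
  have S_Q: "?S * ?Q = (\<Sum>i\<in>I. \<Sum>j\<in>I. a i * (a j * (x j)\<^sup>2))"
    by (rule sum_product)
  have Q_S: "?S * ?Q = (\<Sum>i\<in>I. \<Sum>j\<in>I. a j * (a i * (x i)\<^sup>2))"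
    by (subst sum.swap) (rule sum_product)
  have T_T: "?T\<^sup>2 = (\<Sum>i\<in>I. \<Sum>j\<in>I. (a i * x i) * (a j * x j))"
    unfolding power2_eq_square by (rule sum_product)
  have "(\<Sum>i\<in>I. \<Sum>j\<in>I. a i * a j * (x i - x j)\<^sup>2)
      = (\<Sum>i\<in>I. \<Sum>j\<in>I. a i * (a j * (x j)\<^sup>2) + a j * (a i * (x i)\<^sup>2)
          - 2 * ((a i * x i) * (a j * x j)))"
    by (intro sum.cong refl) (simp add: power2_eq_square algebra_simps)
  also have "\<dots> = (\<Sum>i\<in>I. \<Sum>j\<in>I. a i * (a j * (x j)\<^sup>2))
      + (\<Sum>i\<in>I. \<Sum>j\<in>I. a j * (a i * (x i)\<^sup>2))
      - 2 * (\<Sum>i\<in>I. \<Sum>j\<in>I. (a i * x i) * (a j * x j))"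
    by (simp only: sum.distrib sum_subtractf flip: sum_distrib_left)
  also have "\<dots> = 2 * (?S * ?Q - ?T\<^sup>2)"
    unfolding S_Q [symmetric] Q_S [symmetric] T_T [symmetric] by (simp add: algebra_simps)
  finally have "2 * (?S * ?Q - ?T\<^sup>2) = (\<Sum>i\<in>I. \<Sum>j\<in>I. a i * a j * (x i - x j)\<^sup>2)" ..
  also have "\<dots> \<ge> 0"
    using assms by (intro sum_nonneg) simp
  finally show ?thesis by simp
qed

lemma even_weighted_sum_square_diff:
  fixes a x :: "'i \<Rightarrow> 'a::ring_parity"
  shows "even ((\<Sum>i\<in>I. a i * (x i)\<^sup>2) - (\<Sum>i\<in>I. a i * x i))"
proof -
  have "(\<Sum>i\<in>I. a i * (x i)\<^sup>2) - (\<Sum>i\<in>I. a i * x i) = (\<Sum>i\<in>I. a i * ((x i)\<^sup>2 - x i))"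
    by (simp add: sum_subtractf right_diff_distrib)
  also have "even \<dots>"
    by (intro dvd_sum dvd_mult) simp
  finally show ?thesis .
qed

lemma of_int_polyg:
  "(of_int (polyg m x) :: 'a::field_char_0)
     = (of_int m - 2) / 2 * ((of_int x)\<^sup>2 - of_int x) + of_int x"
proof -
  have "2 dvd (m - 2) * (x\<^sup>2 - x)"
    by simp
  then obtain k where k: "(m - 2) * (x\<^sup>2 - x) = 2 * k" ..
  have "(of_int m - 2) * ((of_int x)\<^sup>2 - of_int x) = (2 * of_int k :: 'a)"
    using arg_cong [OF k, of "of_int :: int \<Rightarrow> 'a"] by simp
  moreover have "polyg m x = k + x"
    unfolding polyg_def k by simp
  ultimately show ?thesis
    by simp
qed

lemma of_int_polygF:
  "(of_int (polygF m a x) :: 'a::field_char_0)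
     = (of_int m - 2) / 2 * (of_int (\<Sum>i=1..4. a i * (x i)\<^sup>2) - of_int (\<Sum>i=1..4. a i * x i))
       + of_int (\<Sum>i=1..4. a i * x i)"
  unfolding polygF_def of_int_sum of_int_mult of_int_polyg
  by (simp add: sum_distrib_left sum_subtractf sum.distrib algebra_simps)

lemma coordinate_nonneg_of_weighted_sums:
  fixes a x :: "'i \<Rightarrow> 'a::linordered_idom"
  assumes "finite I" "j \<in> I" "\<And>i. i \<in> I \<Longrightarrow> 0 \<le> a i" "0 < a j"
    and B_nonneg: "0 \<le> (\<Sum>i\<in>I. a i * x i)"
    and dominates: "(\<Sum>i\<in>I-{j}. a i) * (\<Sum>i\<in>I. a i * (x i)\<^sup>2) \<le> (\<Sum>i\<in>I. a i * x i)\<^sup>2"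
  shows "0 \<le> x j"
proof (rule ccontr)
  assume "\<not> 0 \<le> x j"
  let ?J = "I - {j}"
  let ?T = "\<Sum>i\<in>?J. a i * x i" and ?Q = "\<Sum>i\<in>?J. a i * (x i)\<^sup>2"
  have split_B: "(\<Sum>i\<in>I. a i * x i) = a j * x j + ?T"
    and split_A: "(\<Sum>i\<in>I. a i * (x i)\<^sup>2) = a j * (x j)\<^sup>2 + ?Q"
    using assms(1,2) by (simp_all add: sum.remove)
  have "a j * x j < 0"
    using \<open>0 < a j\<close> \<open>\<not> 0 \<le> x j\<close> by (simp add: mult_pos_neg)
  then have "(\<Sum>i\<in>I. a i * x i)\<^sup>2 < ?T\<^sup>2"
    using B_nonneg split_B by (intro power_strict_mono) auto
  also have "\<dots> \<le> (\<Sum>i\<in>?J. a i) * ?Q"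
    using assms(3) by (intro weighted_Cauchy_Schwarz) auto
  also have "\<dots> \<le> (\<Sum>i\<in>?J. a i) * (\<Sum>i\<in>I. a i * (x i)\<^sup>2)"
    using assms(2,3) split_A by (intro mult_left_mono sum_nonneg) auto
  finally show False
    using dominates by simp
qed

lemma coordinates_nonneg_of_weighted_sums:
  fixes a x :: "'i \<Rightarrow> 'a::linordered_idom"
  assumes "finite I" "k \<in> I" "\<And>i. i \<in> I \<Longrightarrow> 0 < a i" "\<And>i. i \<in> I \<Longrightarrow> a k \<le> a i"
    and "0 \<le> (\<Sum>i\<in>I. a i * x i)"
    and "(\<Sum>i\<in>I-{k}. a i) * (\<Sum>i\<in>I. a i * (x i)\<^sup>2) \<le> (\<Sum>i\<in>I. a i * x i)\<^sup>2"
    and "j \<in> I"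
  shows "0 \<le> x j"
proof (rule coordinate_nonneg_of_weighted_sums [OF \<open>finite I\<close> \<open>j \<in> I\<close>])
  have "(\<Sum>i\<in>I-{j}. a i) \<le> (\<Sum>i\<in>I-{k}. a i)"
    using assms(1-4,7) by (simp add: sum_diff1)
  moreover have "0 \<le> (\<Sum>i\<in>I. a i * (x i)\<^sup>2)"
    using assms(3) by (intro sum_nonneg) (simp add: less_imp_le)
  ultimately show "(\<Sum>i\<in>I-{j}. a i) * (\<Sum>i\<in>I. a i * (x i)\<^sup>2) \<le> (\<Sum>i\<in>I. a i * x i)\<^sup>2"
    using assms(6) by (meson mult_right_mono order_trans)
qed (use assms in \<open>auto simp: less_imp_le\<close>)

lemma sqrt_mult_le_of_int_imp:
  fixes s t y :: int
  assumes "0 \<le> s" "0 \<le> t" "sqrt (of_int s) * sqrt (of_int t) \<le> of_int y"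
  shows "0 \<le> y" "s * t \<le> y\<^sup>2"
proof -
  have sqrt_le: "sqrt (of_int (s * t)) \<le> of_int y"
    using assms(3) by (simp add: real_sqrt_mult)
  moreover have "0 \<le> sqrt (of_int (s * t))"
    using assms(1,2) by simp
  ultimately show "0 \<le> y"
    by linarith
  have "real_of_int (s * t) \<le> real_of_int (y\<^sup>2)"
    using sqrt_le_D [OF sqrt_le] by simp
  then show "s * t \<le> y\<^sup>2"
    by (simp only: of_int_le_iff)
qed

theorem lemma3p1:
  fixes a :: "nat \<Rightarrow> int" and m :: int and aa :: nat and b :: int and N :: real
    and x :: "nat \<Rightarrow> int"
  assumes a_pos: "0 < a 1" and a12: "a 1 \<le> a 2" and a23: "a 2 \<le> a 3" and a34: "a 3 \<le> a 4"
    and m3: "m \<ge> 3"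
    and N_def: "N = (real_of_int m - 2) / 2 * (real aa - real_of_int b) + real_of_int b"
    and sol_a: "int aa = (\<Sum>i=1..4. a i * (x i)^2)"
    and sol_b: "b = (\<Sum>i=1..4. a i * x i)"
  shows "int aa mod 2 = b mod 2
     \<and> (\<Sum>i=1..4. a i) * int aa - b^2 \<ge> 0
     \<and> N = real_of_int (polygF m a x)
     \<and> (real_of_int b \<ge> sqrt (real_of_int (a 2 + a 3 + a 4)) * sqrt (real aa)
          \<longrightarrow> represented_N0 m a N)"
proof -
  have weights: "0 < a i" "a 1 \<le> a i" if "i \<in> {1..4}" for i
    using that a_pos a12 a23 a34 by (auto simp: le_Suc_eq eval_nat_numeral)
  have parity: "int aa mod 2 = b mod 2"
    using even_weighted_sum_square_diff [of a x "{1..4}"] sol_a sol_b by (simp add: mod_eq_dvd_iff)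
  have Cauchy_Schwarz: "(\<Sum>i=1..4. a i) * int aa - b\<^sup>2 \<ge> 0"
    using weighted_Cauchy_Schwarz [of "{1..4}" a x] weights sol_a sol_b by (simp add: less_imp_le)
  have N_eq: "N = real_of_int (polygF m a x)"
    unfolding N_def of_int_polygF sol_a [symmetric] sol_b [symmetric] by simp
  have "represented_N0 m a N"
    if b_ge: "sqrt (real_of_int (a 2 + a 3 + a 4)) * sqrt (real aa) \<le> real_of_int b"
  proof -
    have "{1..4} - {1} = {2, 3, 4 :: nat}"
      by auto
    then have other_weights: "(\<Sum>i\<in>{1..4}-{1}. a i) = a 2 + a 3 + a 4"
      by simp
    have "0 \<le> a 2 + a 3 + a 4"
      using weights [of 2] weights [of 3] weights [of 4] by simp
    then have "0 \<le> b" "(a 2 + a 3 + a 4) * int aa \<le> b\<^sup>2"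
      using sqrt_mult_le_of_int_imp [of _ "int aa" b] b_ge by simp_all
    then have "\<forall>i\<in>{1..4}. 0 \<le> x i"
      using coordinates_nonneg_of_weighted_sums [of "{1..4}" 1 a x] weights other_weights sol_a sol_b
      by simp
    then show ?thesis
      using N_eq unfolding represented_N0_def by blast
  qed
  then show ?thesis
    using parity Cauchy_Schwarz N_eq by blast
qed

end
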